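(* Let $L$ be a finite label set. For a subfunctor $S$ of the underlying-set presheaf on pointed finite $L$-labeled transition systems, define $(\neg S)(G,v)$ to hold iff for every finite $L$-labeled transition system $H$ and every homomorphism $h:G\to H$, $S(H,h(v))$ fails. Then for every satisfiable positive existential HML formula $\varphi$, $\neg S_\varphi=\bot$ (i.e. $(\neg S_\varphi)(G,v)$ fails for every pointed $(G,v)$) and $\neg\neg S_\varphi=\top$ (i.e. $(\neg\neg S_\varphi)(G,v)$ holds for every pointed $(G,v)$).
   Context: Positive existential HML is generated by $\top$, $\varphi_1\wedge\varphi_2$, and $\langle a\rangle\varphi$ ($a\in L$), with $\langle a\rangle\varphi$ true at $s$ iff some $a$-successor satisfies $\varphi$. Homomorphisms are maps on states preserving labeled edges. $S_\varphi(G,v)$ holds iff $\varphi$ holds at $v$ in $G$; this is a subfunctor since positive existential formulas are preserved along homomorphisms. *)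

theory Defs
  imports Main
begin

text \<open>Finite L-labeled transition systems. States are drawn from nat; every finite
LTS is isomorphic to one of this form, so quantifying over them is quantifying
over all finite LTSs up to isomorphism.\<close>

record 'l lts =
  states :: "nat set"
  edges  :: "(nat \<times> 'l \<times> nat) set"

definition is_lts :: "'l set \<Rightarrow> 'l lts \<Rightarrow> bool" where
  "is_lts L G \<longleftrightarrow> finite (states G) \<and>
     edges G \<subseteq> states G \<times> L \<times> states G"

definition is_hom :: "'l lts \<Rightarrow> 'l lts \<Rightarrow> (nat \<Rightarrow> nat) \<Rightarrow> bool" where
  "is_hom G H h \<longleftrightarrow> (\<forall>s\<in>states G. h s \<in> states H) \<and>
     (\<forall>s a t. (s, a, t) \<in> edges G \<longrightarrow> (h s, a, h t) \<in> edges H)"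

datatype 'l hml = HTop | HConj "'l hml" "'l hml" | HDia 'l "'l hml"

fun hml_labels :: "'l hml \<Rightarrow> 'l set" where
  "hml_labels HTop = {}"
| "hml_labels (HConj p q) = hml_labels p \<union> hml_labels q"
| "hml_labels (HDia a p) = insert a (hml_labels p)"

fun hml_sat :: "'l lts \<Rightarrow> nat \<Rightarrow> 'l hml \<Rightarrow> bool" where
  "hml_sat G s HTop = True"
| "hml_sat G s (HConj p q) = (hml_sat G s p \<and> hml_sat G s q)"
| "hml_sat G s (HDia a p) = (\<exists>t. (s, a, t) \<in> edges G \<and> hml_sat G t p)"

definition S_hml :: "'l hml \<Rightarrow> 'l lts \<Rightarrow> nat \<Rightarrow> bool" where
  "S_hml \<phi> G v = hml_sat G v \<phi>"

definition satisfiable :: "'l set \<Rightarrow> 'l hml \<Rightarrow> bool" where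
  "satisfiable L \<phi> \<longleftrightarrow> (\<exists>G v. is_lts L G \<and> v \<in> states G \<and> hml_sat G v \<phi>)"

definition neg_sf :: "'l set \<Rightarrow> ('l lts \<Rightarrow> nat \<Rightarrow> bool) \<Rightarrow> 'l lts \<Rightarrow> nat \<Rightarrow> bool" where
  "neg_sf L S G v \<longleftrightarrow> (\<forall>H h. is_lts L H \<longrightarrow> is_hom G H h \<longrightarrow> \<not> S H (h v))"

end

theory Submission
  imports Defs
begin

text \<open>The one-state LTS carrying a loop for every label of L is terminal: every LTS maps
into it by the constant homomorphism, and its state satisfies every formula over L.
Hence every pointed LTS maps to a point satisfying \<open>\<phi>\<close>, so \<open>\<not> S\<^sub>\<phi>\<close> holds nowhere, and
then \<open>\<not>\<not> S\<^sub>\<phi>\<close> holds everywhere.\<close>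

definition terminal_lts :: "'l set \<Rightarrow> 'l lts" where
  "terminal_lts L = \<lparr>states = {0}, edges = {(0, a, 0) | a. a \<in> L}\<rparr>"

lemma is_lts_terminal_lts: "is_lts L (terminal_lts L)"
  by (auto simp: is_lts_def terminal_lts_def)

lemma is_hom_terminal_lts: "is_lts L G \<Longrightarrow> is_hom G (terminal_lts L) (\<lambda>_. 0)"
  by (auto simp: is_hom_def is_lts_def terminal_lts_def)

lemma hml_sat_terminal_lts: "hml_labels \<phi> \<subseteq> L \<Longrightarrow> hml_sat (terminal_lts L) 0 \<phi>"
  by (induction \<phi>) (auto simp: terminal_lts_def)

lemma not_neg_sf_S_hml:
  assumes "is_lts L G" and "hml_labels \<phi> \<subseteq> L"
  shows "\<not> neg_sf L (S_hml \<phi>) G v"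
  unfolding neg_sf_def S_hml_def
  using is_lts_terminal_lts is_hom_terminal_lts[OF assms(1)] hml_sat_terminal_lts[OF assms(2)]
  by blast

lemma neg_sf_neg_sf_if_neg_sf_empty:
  assumes "\<And>H w. is_lts L H \<Longrightarrow> \<not> neg_sf L S H w"
  shows "neg_sf L (neg_sf L S) G v"
  using assms by (simp add: neg_sf_def[of L "neg_sf L S"])

theorem mainTheorem20:
  fixes L :: "'l set" and \<phi> :: "'l hml"
  assumes "finite L"
    and "hml_labels \<phi> \<subseteq> L"
    and "satisfiable L \<phi>"
  shows "(\<forall>G v. is_lts L G \<longrightarrow> v \<in> states G \<longrightarrow> \<not> neg_sf L (S_hml \<phi>) G v)
       \<and> (\<forall>G v. is_lts L G \<longrightarrow> v \<in> states G \<longrightarrow> neg_sf L (neg_sf L (S_hml \<phi>)) G v)"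
  using not_neg_sf_S_hml[OF _ assms(2)] neg_sf_neg_sf_if_neg_sf_empty by blast

end
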